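(* Let $s\in\mathbb C$ with $\Re s<0$ and let $w(x)=e^{s/x}$ for $x>0$, $w(0)=0$. Then for every $\sigma>-\Re s$, $\sup_{k\in\mathbb N}\sup_{x\in[0,\infty)}\frac{\sigma^k}{(k!)^2}\Big|\frac{d^k w}{dx^k}(x)\Big|=\infty.$ *)

theory Defs
  imports "HOL-Analysis.Analysis"
begin

fun kth_deriv :: "nat \<Rightarrow> (real \<Rightarrow> complex) \<Rightarrow> real \<Rightarrow> complex" where
  "kth_deriv 0 f = f"
| "kth_deriv (Suc k) f = (\<lambda>x. vector_derivative (kth_deriv k f) (at x within {0..}))"

definition wfun :: "complex \<Rightarrow> real \<Rightarrow> complex" where
  "wfun s x = (if x > 0 then exp (s / complex_of_real x) else 0)"

end

theory Submission
  imports Defs "HOL-Computational_Algebra.Polynomial" "HOL-Real_Asymp.Real_Asymp"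
begin

text \<open>If all terms were bounded by some M, then |w_k(x)| \<le> M (k!)^2 / \<sigma>^k on (0,\<infinity>)
  for the k-th derivative w_k. Since all derivatives of w tend to 0 at 0+, integrating k times
  from 0 gives exp(Re s / x) = |w(x)| \<le> M k! (x/\<sigma>)^k. Summing these bounds with geometric
  weights l^k (0 < l < 1) yields exp((Re s + l \<sigma>) / x) \<le> M / (1 - l) for all x > 0, which is
  absurd as x \<rightarrow> 0+ once l is chosen with Re s + l \<sigma> > 0; this is where \<sigma> > -Re s is needed.\<close>

lemma norm_bound_from_derivative_at_right_0:
  fixes g g' :: "real \<Rightarrow> 'a::real_normed_vector"
  assumes deriv: "\<And>t. t > 0 \<Longrightarrow> (g has_vector_derivative g' t) (at t)"
    and lim: "(g \<longlongrightarrow> 0) (at_right 0)"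
    and bnd: "\<And>t. t > 0 \<Longrightarrow> norm (g' t) \<le> C * t ^ n / fact n"
    and "x > 0"
  shows "norm (g x) \<le> C * x ^ Suc n / fact (Suc n)"
proof -
  define \<phi> where "\<phi> t = C * t ^ Suc n / fact (Suc n)" for t
  have \<phi>': "(\<phi> has_vector_derivative C * t ^ n / fact n) (at t)" for t
  proof -
    have "(\<phi> has_real_derivative C * (real (Suc n) * t ^ n) / fact (Suc n)) (at t)"
      unfolding \<phi>_def by (intro DERIV_cdivide DERIV_cmult) (use DERIV_pow[of "Suc n" t] in simp)
    moreover have "C * (real (Suc n) * t ^ n) / fact (Suc n) = C * t ^ n / fact n"
      by (simp only: fact_Suc of_nat_mult) (simp add: field_simps del: of_nat_Suc)
    ultimately show ?thesis
      by (simp add: has_real_derivative_iff_has_vector_derivative)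
  qed
  have "((\<lambda>\<epsilon>. \<phi> x - \<phi> \<epsilon>) \<longlongrightarrow> \<phi> x - \<phi> 0) (at_right 0)"
    unfolding \<phi>_def by (intro tendsto_intros) (auto intro: tendsto_eq_intros)
  moreover have "((\<lambda>\<epsilon>. norm (g x - g \<epsilon>)) \<longlongrightarrow> norm (g x - 0)) (at_right 0)"
    by (intro tendsto_intros lim)
  moreover have "\<forall>\<^sub>F \<epsilon> in at_right 0. norm (g x - g \<epsilon>) \<le> \<phi> x - \<phi> \<epsilon>"
    unfolding eventually_at_right_field
  proof (intro exI[of _ x] conjI allI impI)
    fix \<epsilon> assume \<epsilon>: "0 < \<epsilon>" "\<epsilon> < x"
    have g_cont: "continuous_on {\<epsilon>..x} g"
      using \<epsilon> deriv by (intro continuous_at_imp_continuous_on ballI)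
        (meson atLeastAtMost_iff has_vector_derivative_continuous less_le_trans)
    have \<phi>_cont: "continuous_on {\<epsilon>..x} \<phi>"
      unfolding \<phi>_def by (intro continuous_intros) auto
    show "norm (g x - g \<epsilon>) \<le> \<phi> x - \<phi> \<epsilon>"
      by (rule differentiable_bound_general[where f' = g' and \<phi>' = "\<lambda>t. C * t ^ n / fact n"])
        (use \<epsilon> g_cont \<phi>_cont deriv \<phi>' bnd in auto)
  qed (use \<open>x > 0\<close> in auto)
  ultimately have "norm (g x - 0) \<le> \<phi> x - \<phi> 0"
    by (rule tendsto_le[OF trivial_limit_at_right_real])
  then show ?thesis by (simp add: \<phi>_def)
qed

lemma norm_bound_from_iterated_derivatives:
  fixes f :: "nat \<Rightarrow> real \<Rightarrow> 'a::real_normed_vector"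
  assumes deriv: "\<And>k t. t > 0 \<Longrightarrow> (f k has_vector_derivative f (Suc k) t) (at t)"
    and lim: "\<And>k. (f k \<longlongrightarrow> 0) (at_right 0)"
    and bnd: "\<And>k t. t > 0 \<Longrightarrow> norm (f k t) \<le> B k"
    and "x > 0"
  shows "norm (f j x) \<le> B (j + n) * x ^ n / fact n"
  using \<open>x > 0\<close>
proof (induction n arbitrary: j x)
  case 0
  then show ?case using bnd by simp
next
  case (Suc n)
  have "norm (f (Suc j) t) \<le> B (j + Suc n) * t ^ n / fact n" if "t > 0" for t
    using Suc.IH[of t "Suc j"] that by simp
  then show ?case
    using norm_bound_from_derivative_at_right_0[OF deriv lim _ Suc.prems, of j] by blast
qed

lemma mult_exp_le_of_taylor_terms_le:
  fixes a y M l :: real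
  assumes terms: "\<And>n. a * (y ^ n / fact n) \<le> M" and "0 \<le> l" "l < 1"
  shows "a * exp (l * y) \<le> M / (1 - l)"
proof (rule sums_le)
  show "(\<lambda>n. a * ((l * y) ^ n / fact n)) sums (a * exp (l * y))"
    by (rule sums_mult) (use exp_converges[of "l * y"] in \<open>simp add: divide_inverse_commute\<close>)
  show "(\<lambda>n. M * l ^ n) sums (M / (1 - l))"
    using sums_mult[OF geometric_sums, of l M] assms by simp
  fix n
  have "a * ((l * y) ^ n / fact n) = l ^ n * (a * (y ^ n / fact n))"
    by (simp add: power_mult_distrib)
  also have "\<dots> \<le> l ^ n * M"
    using terms \<open>0 \<le> l\<close> by (intro mult_left_mono) auto
  finally show "a * ((l * y) ^ n / fact n) \<le> M * l ^ n"
    by (simp add: mult.commute)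
qed

lemma has_field_derivative_poly_inverse_exp:
  assumes "z \<noteq> 0"
  shows "((\<lambda>z. poly p (1 / z) * exp (s / z)) has_field_derivative
           poly (- monom 1 2 * (pderiv p + smult s p)) (1 / z) * exp (s / z)) (at z)"
proof -
  have "((\<lambda>z. poly p (1 / z) * exp (s / z)) has_field_derivative
      poly (pderiv p) (1 / z) * (- (1 / z^2)) * exp (s / z)
        + poly p (1 / z) * (exp (s / z) * (- s / z^2))) (at z)"
    using assms
    by (auto intro!: derivative_eq_intros DERIV_chain2[OF poly_DERIV] simp: power2_eq_square)
  moreover have "poly (pderiv p) (1 / z) * (- (1 / z^2)) * exp (s / z)
        + poly p (1 / z) * (exp (s / z) * (- s / z^2))
      = poly (- monom 1 2 * (pderiv p + smult s p)) (1 / z) * exp (s / z)"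
    by (simp add: poly_monom algebra_simps power_divide)
  ultimately show ?thesis by simp
qed

lemma poly_inverse_exp_tendsto_0:
  fixes p :: "complex poly"
  assumes "Re s < 0"
  shows "((\<lambda>x::real. poly p (1 / of_real x) * exp (s / of_real x)) \<longlongrightarrow> 0) (at_right 0)"
proof -
  have monomial: "((\<lambda>x::real. (1 / of_real x) ^ i * exp (s / of_real x)) \<longlongrightarrow> 0) (at_right 0)" for i
  proof (rule tendsto_norm_zero_cancel)
    have "((\<lambda>x. (1 / x) ^ i * exp (Re s / x)) \<longlongrightarrow> 0) (at_right 0)"
      using assms by real_asymp
    then show "((\<lambda>x::real. norm ((1 / of_real x) ^ i * exp (s / of_real x))) \<longlongrightarrow> 0) (at_right 0)"
      by (rule Lim_transform_eventually)
        (auto simp: eventually_at_right_field norm_mult norm_power norm_divide intro!: exI[of _ 1])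
  qed
  have "((\<lambda>x::real. \<Sum>i\<le>degree p. coeff p i * ((1 / of_real x) ^ i * exp (s / of_real x)))
      \<longlongrightarrow> (\<Sum>i\<le>degree p. coeff p i * 0)) (at_right 0)"
    by (intro tendsto_intros monomial)
  then show ?thesis
    by (simp add: poly_altdef sum_distrib_right mult.assoc)
qed

fun wpoly :: "complex \<Rightarrow> nat \<Rightarrow> complex poly" where
  "wpoly s 0 = 1"
| "wpoly s (Suc k) = - monom 1 2 * (pderiv (wpoly s k) + smult s (wpoly s k))"

definition wderiv :: "complex \<Rightarrow> nat \<Rightarrow> real \<Rightarrow> complex" where
  "wderiv s k x = poly (wpoly s k) (1 / of_real x) * exp (s / of_real x)"

lemma wderiv_has_vector_derivative:
  "x > 0 \<Longrightarrow> (wderiv s k has_vector_derivative wderiv s (Suc k) x) (at x)"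
  unfolding wderiv_def wpoly.simps
  by (rule has_vector_derivative_real_field[of "\<lambda>z. poly (wpoly s k) (1 / z) * exp (s / z)", simplified])
     (rule has_field_derivative_poly_inverse_exp, simp)

lemma wderiv_tendsto_0: "Re s < 0 \<Longrightarrow> (wderiv s k \<longlongrightarrow> 0) (at_right 0)"
  unfolding wderiv_def by (rule poly_inverse_exp_tendsto_0)

lemma kth_deriv_wfun: "x > 0 \<Longrightarrow> kth_deriv k (wfun s) x = wderiv s k x"
proof (induction k arbitrary: x)
  case 0
  then show ?case by (simp add: wfun_def wderiv_def)
next
  case (Suc k)
  have "(kth_deriv k (wfun s) has_vector_derivative wderiv s (Suc k) x) (at x)"
    by (rule has_vector_derivative_transform_within_open[of _ _ _ "{0<..}"])
       (use Suc wderiv_has_vector_derivative in auto)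
  moreover have "at x within {0..} = at x"
    by (rule at_within_interior) (use Suc.prems in simp)
  ultimately show ?case by (simp add: vector_derivative_at)
qed

lemma exp_taylor_term_le_of_wderiv_bound:
  assumes "Re s < 0" and "\<sigma> > 0"
    and bnd: "\<And>k x. x > 0 \<Longrightarrow> cmod (wderiv s k x) \<le> M * (fact k)^2 / \<sigma> ^ k"
    and "x > 0"
  shows "exp (Re s / x) * ((\<sigma> / x) ^ n / fact n) \<le> M"
proof -
  have "exp (Re s / x) = cmod (wderiv s 0 x)"
    by (simp add: wderiv_def)
  also have "\<dots> \<le> M * (fact n)^2 / \<sigma> ^ n * x ^ n / fact n"
    using norm_bound_from_iterated_derivatives[where f = "wderiv s",
        OF wderiv_has_vector_derivative wderiv_tendsto_0[OF \<open>Re s < 0\<close>] bnd \<open>x > 0\<close>, of 0 n]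
    by simp
  also have "\<dots> = M * fact n * (x / \<sigma>) ^ n"
    by (simp add: power2_eq_square power_divide)
  finally have "exp (Re s / x) * ((\<sigma> / x) ^ n / fact n)
      \<le> M * fact n * (x / \<sigma>) ^ n * ((\<sigma> / x) ^ n / fact n)"
    by (rule mult_right_mono) (use \<open>\<sigma> > 0\<close> \<open>x > 0\<close> in simp)
  also have "\<dots> = M"
    using \<open>\<sigma> > 0\<close> \<open>x > 0\<close> by (simp add: power_mult_distrib[symmetric])
  finally show ?thesis .
qed

lemma wderiv_not_Gevrey2_bounded:
  assumes Res: "Re s < 0" and \<sigma>: "\<sigma> > - Re s"
  shows "\<exists>k x. x > 0 \<and> M < \<sigma> ^ k / (fact k)^2 * cmod (wderiv s k x)"
proof (rule ccontr)
  assume bounded: "\<not> ?thesis"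
  have "\<sigma> > 0" using assms by simp
  have bnd: "cmod (wderiv s k x) \<le> M * (fact k)^2 / \<sigma> ^ k" if "x > 0" for k x
  proof -
    have "\<sigma> ^ k / (fact k)^2 * cmod (wderiv s k x) \<le> M"
      using bounded that not_less by blast
    then show ?thesis
      using \<open>\<sigma> > 0\<close> by (simp add: field_simps)
  qed
  define l where "l = (\<sigma> - Re s) / (2 * \<sigma>)"
  have l: "0 \<le> l" "l < 1" using assms \<open>\<sigma> > 0\<close> by (auto simp: l_def field_simps)
  define d where "d = Re s + l * \<sigma>"
  have "l * \<sigma> = (\<sigma> - Re s) / 2" using \<open>\<sigma> > 0\<close> by (simp add: l_def)
  then have "d > 0" using \<sigma> by (simp add: d_def)
  define K where "K = M / (1 - l)"
  define x where "x = d / (\<bar>K\<bar> + 1)"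
  have "x > 0" using \<open>d > 0\<close> by (simp add: x_def)
  have "exp (d / x) = exp (Re s / x) * exp (l * (\<sigma> / x))"
    by (simp add: d_def exp_add[symmetric] add_divide_distrib)
  also have "\<dots> \<le> K"
    unfolding K_def
    by (rule mult_exp_le_of_taylor_terms_le[OF
          exp_taylor_term_le_of_wderiv_bound[OF Res \<open>\<sigma> > 0\<close> bnd \<open>x > 0\<close>] l])
  finally have "exp (d / x) \<le> K" .
  moreover have "d / x = \<bar>K\<bar> + 1"
    using \<open>d > 0\<close> by (simp add: x_def)
  ultimately have "exp (\<bar>K\<bar> + 1) \<le> K" by simp
  then show False
    using exp_ge_add_one_self[of "\<bar>K\<bar> + 1"] by linarith
qed

theorem lemmaA1:
  fixes s :: complex and \<sigma> :: real
  assumes "Re s < 0" and "\<sigma> > - Re s"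
  shows "(SUP k::nat. SUP x\<in>{0::real..}.
            ereal (\<sigma> ^ k / (fact k)^2 * cmod (kth_deriv k (wfun s) x))) = \<infinity>"
proof -
  have "\<exists>k. \<exists>x\<in>{0::real..}. y < ereal (\<sigma> ^ k / (fact k)^2 * cmod (kth_deriv k (wfun s) x))"
    if "y < \<infinity>" for y
  proof -
    obtain M where "y \<le> ereal M" using \<open>y < \<infinity>\<close> by (cases y) auto
    moreover obtain k x where "x > 0" "M < \<sigma> ^ k / (fact k)^2 * cmod (wderiv s k x)"
      using wderiv_not_Gevrey2_bounded[OF assms] by blast
    ultimately have "y < ereal (\<sigma> ^ k / (fact k)^2 * cmod (kth_deriv k (wfun s) x))"
      using kth_deriv_wfun[of x k s] by (simp add: order.strict_trans1)
    with \<open>x > 0\<close> show ?thesis by (auto intro!: exI[of _ k] bexI[of _ x])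
  qed
  then show ?thesis
    unfolding top_ereal_def[symmetric] SUP_eq_top_iff less_SUP_iff by (auto simp: top_ereal_def)
qed

end
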